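(* If $p=p(n)\to0$ and $np\to\infty$ as $n\to\infty$, then a.a.s. $\Gamma\in G(n,p)$ has no domination diamonds.
   Context: $G(n,p)$ is the Erdős–Rényi random graph on $n$ vertices with each edge present independently with probability $p$; a.a.s. means with probability tending to $1$. For distinct vertices $x,y$, $x>y$ means every neighbour of $y$ is adjacent to or equal to $x$. A domination diamond is a quadruple $(a,b,c,d)$ of distinct vertices with $a\sim b\sim c\sim d\sim a$, $a\not\sim c$, $b\not\sim d$, and $a>c$. *)

theory Defs
  imports Complex_Main
begin

text \<open>Graphs on the vertex set {0..<n}: a graph is a set of edges, each edge a
2-element subset of {0..<n}.\<close>

definition all_edges :: "nat \<Rightarrow> nat set set" where
  "all_edges n = {e. e \<subseteq> {..<n} \<and> card e = 2}"

definition adj :: "nat set set \<Rightarrow> nat \<Rightarrow> nat \<Rightarrow> bool" where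
  "adj E x y \<longleftrightarrow> {x, y} \<in> E"

definition dominates :: "nat set set \<Rightarrow> nat \<Rightarrow> nat \<Rightarrow> bool" where
  "dominates E x y \<longleftrightarrow> x \<noteq> y \<and> (\<forall>z. adj E y z \<longrightarrow> adj E x z \<or> z = x)"

definition dom_diamond :: "nat \<Rightarrow> nat set set \<Rightarrow> nat \<Rightarrow> nat \<Rightarrow> nat \<Rightarrow> nat \<Rightarrow> bool" where
  "dom_diamond n E a b c d \<longleftrightarrow>
     a < n \<and> b < n \<and> c < n \<and> d < n \<and> distinct [a, b, c, d] \<and>
     adj E a b \<and> adj E b c \<and> adj E c d \<and> adj E d a \<and>
     \<not> adj E a c \<and> \<not> adj E b d \<and> dominates E a c"

definition has_dom_diamond :: "nat \<Rightarrow> nat set set \<Rightarrow> bool" where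
  "has_dom_diamond n E \<longleftrightarrow> (\<exists>a b c d. dom_diamond n E a b c d)"

definition Gnp_prob :: "nat \<Rightarrow> real \<Rightarrow> (nat set set \<Rightarrow> bool) \<Rightarrow> real" where
  "Gnp_prob n p P =
     (\<Sum>E\<in>Pow (all_edges n). if P E
        then p ^ card E * (1 - p) ^ (card (all_edges n) - card E) else 0)"

end

theory Submission
  imports Defs "HOL-Real_Asymp.Real_Asymp"
begin

text \<open>A domination diamond \<open>(a,b,c,d)\<close> forces the four edges \<open>ab, bc, cd, da\<close> and, for each of
the \<open>n - 4\<close> remaining vertices \<open>z\<close>, the implication \<open>cz \<Longrightarrow> az\<close>. These events involve disjoint
sets of edges, so a fixed quadruple is a diamond with probability at most
\<open>p\<^sup>4 (1 - p + p\<^sup>2)\<^sup>n\<^sup>-\<^sup>4 \<le> e p\<^sup>4 exp (-np/2)\<close> once \<open>p \<le> 1/2\<close>. A union bound over the \<open>n\<^sup>4\<close>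
quadruples gives at most \<open>e (np)\<^sup>4 exp (-np/2)\<close>, which tends to \<open>0\<close> as \<open>np \<rightarrow> \<infinity>\<close>.\<close>

definition bern_weight :: "real \<Rightarrow> 'a set \<Rightarrow> 'a set \<Rightarrow> real" where
  "bern_weight p U E = (\<Prod>e\<in>U. if e \<in> E then p else 1 - p)"

definition bern_prob :: "real \<Rightarrow> 'a set \<Rightarrow> ('a set \<Rightarrow> bool) \<Rightarrow> real" where
  "bern_prob p U P = (\<Sum>E\<in>Pow U. if P E then bern_weight p U E else 0)"

lemma bern_weight_nonneg: "0 \<le> p \<Longrightarrow> p \<le> 1 \<Longrightarrow> 0 \<le> bern_weight p U E"
  unfolding bern_weight_def by (intro prod_nonneg) auto

lemma bern_prob_nonneg: "0 \<le> p \<Longrightarrow> p \<le> 1 \<Longrightarrow> 0 \<le> bern_prob p U P"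
  unfolding bern_prob_def by (intro sum_nonneg) (auto intro: bern_weight_nonneg)

lemma bern_prob_mono:
  assumes "0 \<le> p" "p \<le> 1" "\<And>E. E \<subseteq> U \<Longrightarrow> P E \<Longrightarrow> Q E"
  shows "bern_prob p U P \<le> bern_prob p U Q"
  unfolding bern_prob_def using assms by (intro sum_mono) (auto intro: bern_weight_nonneg)

lemma bern_prob_union_bound:
  assumes "0 \<le> p" "p \<le> 1" "finite I"
  shows "bern_prob p U (\<lambda>E. \<exists>i\<in>I. P i E) \<le> (\<Sum>i\<in>I. bern_prob p U (P i))"
proof -
  have "(if \<exists>i\<in>I. P i E then bern_weight p U E else 0)
      \<le> (\<Sum>i\<in>I. if P i E then bern_weight p U E else 0)" for E
  proof (cases "\<exists>i\<in>I. P i E")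
    case True
    then obtain i where "i \<in> I" "P i E" by blast
    have "(if P i E then bern_weight p U E else 0)
        \<le> (\<Sum>i\<in>I. if P i E then bern_weight p U E else 0)"
      by (rule member_le_sum) (use \<open>i \<in> I\<close> assms in \<open>auto intro: bern_weight_nonneg\<close>)
    then show ?thesis using True \<open>P i E\<close> by simp
  qed (use assms in \<open>auto intro!: sum_nonneg bern_weight_nonneg\<close>)
  then have "bern_prob p U (\<lambda>E. \<exists>i\<in>I. P i E)
      \<le> (\<Sum>E\<in>Pow U. \<Sum>i\<in>I. if P i E then bern_weight p U E else 0)"
    unfolding bern_prob_def by (intro sum_mono)
  also have "\<dots> = (\<Sum>i\<in>I. bern_prob p U (P i))"
    unfolding bern_prob_def by (rule sum.swap)
  finally show ?thesis .
qed

lemma bern_prob_indep: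
  assumes "finite U1" "finite U2" "U1 \<inter> U2 = {}"
    and P: "\<And>E. E \<subseteq> U1 \<union> U2 \<Longrightarrow> P E \<longleftrightarrow> P1 (E \<inter> U1) \<and> P2 (E \<inter> U2)"
  shows "bern_prob p (U1 \<union> U2) P = bern_prob p U1 P1 * bern_prob p U2 P2"
proof -
  let ?h = "\<lambda>(A, B). A \<union> B"
  have inj: "inj_on ?h (Pow U1 \<times> Pow U2)"
    using assms(3) by (auto simp: inj_on_def) blast+
  have "Pow (U1 \<union> U2) \<subseteq> ?h ` (Pow U1 \<times> Pow U2)"
  proof
    fix X assume "X \<in> Pow (U1 \<union> U2)"
    then have "X = ?h (X \<inter> U1, X \<inter> U2)" by auto
    then show "X \<in> ?h ` (Pow U1 \<times> Pow U2)" by blast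
  qed
  then have img: "Pow (U1 \<union> U2) = ?h ` (Pow U1 \<times> Pow U2)" by auto
  have weight: "bern_weight p (U1 \<union> U2) (A \<union> B) = bern_weight p U1 A * bern_weight p U2 B"
    if "A \<subseteq> U1" "B \<subseteq> U2" for A B
    unfolding bern_weight_def using assms(1-3) that
    by (simp add: prod.union_disjoint) (intro arg_cong2[where f = "(*)"] prod.cong; auto)
  have event: "P (A \<union> B) \<longleftrightarrow> P1 A \<and> P2 B" if "A \<subseteq> U1" "B \<subseteq> U2" for A B
  proof -
    have "(A \<union> B) \<inter> U1 = A" "(A \<union> B) \<inter> U2 = B" using that assms(3) by auto
    then show ?thesis using P[of "A \<union> B"] that by auto
  qed
  have "bern_prob p (U1 \<union> U2) P
      = (\<Sum>x\<in>Pow U1 \<times> Pow U2. if P (?h x) then bern_weight p (U1 \<union> U2) (?h x) else 0)"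
    unfolding bern_prob_def img by (subst sum.reindex[OF inj]) (simp add: comp_def)
  also have "\<dots> = (\<Sum>(A, B)\<in>Pow U1 \<times> Pow U2.
      (if P1 A then bern_weight p U1 A else 0) * (if P2 B then bern_weight p U2 B else 0))"
    by (intro sum.cong refl) (auto simp: weight event)
  also have "\<dots> = bern_prob p U1 P1 * bern_prob p U2 P2"
    unfolding bern_prob_def sum_product sum.cartesian_product by simp
  finally show ?thesis .
qed

lemma bern_prob_prod:
  assumes "finite J" "\<And>j. j \<in> J \<Longrightarrow> finite (B j)"
    and "\<And>i k. i \<in> J \<Longrightarrow> k \<in> J \<Longrightarrow> i \<noteq> k \<Longrightarrow> B i \<inter> B k = {}"
  shows "bern_prob p (\<Union>j\<in>J. B j) (\<lambda>E. \<forall>j\<in>J. Q j (E \<inter> B j)) = (\<Prod>j\<in>J. bern_prob p (B j) (Q j))"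
  using assms
proof (induction J rule: finite_induct)
  case empty
  then show ?case by (simp add: bern_prob_def bern_weight_def)
next
  case (insert j J)
  have "bern_prob p (B j \<union> (\<Union>i\<in>J. B i)) (\<lambda>E. \<forall>i\<in>insert j J. Q i (E \<inter> B i))
      = bern_prob p (B j) (Q j) * bern_prob p (\<Union>i\<in>J. B i) (\<lambda>E. \<forall>i\<in>J. Q i (E \<inter> B i))"
  proof (rule bern_prob_indep)
    show "finite (B j)" "finite (\<Union>i\<in>J. B i)" using insert by auto
    show "B j \<inter> (\<Union>i\<in>J. B i) = {}" using insert.prems(2) insert.hyps(2) by blast
    fix E
    have "E \<inter> (\<Union>i\<in>J. B i) \<inter> B i = E \<inter> B i" if "i \<in> J" for i using that by auto
    then show "(\<forall>i\<in>insert j J. Q i (E \<inter> B i))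
        \<longleftrightarrow> Q j (E \<inter> B j) \<and> (\<forall>i\<in>J. Q i (E \<inter> (\<Union>i\<in>J. B i) \<inter> B i))"
      by auto
  qed
  then show ?case using insert by simp
qed

lemma bern_prob_True:
  assumes "finite U"
  shows "bern_prob p U (\<lambda>_. True) = 1"
proof -
  have "Pow {e} = {{}, {e}}" for e :: 'a by blast
  then have "bern_prob p {e} (\<lambda>_. True) = 1" for e :: 'a
    by (simp add: bern_prob_def bern_weight_def)
  moreover have "bern_prob p (\<Union>e\<in>U. {e}) (\<lambda>E. \<forall>e\<in>U. True)
      = (\<Prod>e\<in>U. bern_prob p {e} (\<lambda>_. True))"
    by (rule bern_prob_prod) (use assms in auto)
  ultimately show ?thesis by simp
qed

lemma bern_prob_compl:
  assumes "finite U"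
  shows "bern_prob p U (\<lambda>E. \<not> P E) = 1 - bern_prob p U P"
proof -
  have "bern_prob p U (\<lambda>E. \<not> P E) + bern_prob p U P = bern_prob p U (\<lambda>_. True)"
    unfolding bern_prob_def by (simp add: sum.distrib[symmetric]) (intro sum.cong, auto)
  then show ?thesis using bern_prob_True[OF assms] by simp
qed

lemma bern_prob_restrict:
  assumes "finite U" "S \<subseteq> U" "\<And>E. E \<subseteq> U \<Longrightarrow> P E \<longleftrightarrow> Q (E \<inter> S)"
  shows "bern_prob p U P = bern_prob p S Q"
proof -
  have U: "U = S \<union> (U - S)" using assms(2) by blast
  have "bern_prob p (S \<union> (U - S)) P = bern_prob p S Q * bern_prob p (U - S) (\<lambda>_. True)"
    by (rule bern_prob_indep) (use assms finite_subset U in \<open>auto simp: Int_absorb2\<close>)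
  then show ?thesis using assms(1) U by (simp add: bern_prob_True)
qed

lemma bern_prob_superset:
  assumes "finite S"
  shows "bern_prob p S (\<lambda>F. S \<subseteq> F) = p ^ card S"
proof -
  have "Pow {e} = {{}, {e}}" for e :: 'a by blast
  then have "bern_prob p {e} (\<lambda>F. e \<in> F) = p" for e :: 'a
    by (simp add: bern_prob_def bern_weight_def)
  moreover have "bern_prob p (\<Union>e\<in>S. {e}) (\<lambda>F. \<forall>e\<in>S. e \<in> F \<inter> {e})
      = (\<Prod>e\<in>S. bern_prob p {e} (\<lambda>F. e \<in> F))"
    by (rule bern_prob_prod) (use assms in auto)
  moreover have "(\<forall>e\<in>S. e \<in> F \<inter> {e}) \<longleftrightarrow> S \<subseteq> F" for F by auto
  ultimately show ?thesis by simp
qed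

lemma bern_prob_implications:
  fixes f g :: "'j \<Rightarrow> 'a"
  assumes "finite J" "\<And>j. j \<in> J \<Longrightarrow> f j \<noteq> g j"
    and "\<And>i k. i \<in> J \<Longrightarrow> k \<in> J \<Longrightarrow> i \<noteq> k \<Longrightarrow> {f i, g i} \<inter> {f k, g k} = {}"
  shows "bern_prob p (\<Union>j\<in>J. {f j, g j}) (\<lambda>F. \<forall>j\<in>J. f j \<in> F \<longrightarrow> g j \<in> F)
    = (1 - p + p\<^sup>2) ^ card J"
proof -
  have pair: "bern_prob p {f j, g j} (\<lambda>F. f j \<in> F \<longrightarrow> g j \<in> F) = 1 - p + p\<^sup>2" if "j \<in> J" for j
  proof -
    have "Pow {f j, g j} = {{}, {f j}, {g j}, {f j, g j}}" by (auto simp: Pow_def)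
    then show ?thesis
      using assms(2)[OF that] by (simp add: bern_prob_def bern_weight_def power2_eq_square algebra_simps)
  qed
  have "bern_prob p (\<Union>j\<in>J. {f j, g j}) (\<lambda>F. \<forall>j\<in>J. f j \<in> F \<inter> {f j, g j} \<longrightarrow> g j \<in> F \<inter> {f j, g j})
      = (\<Prod>j\<in>J. bern_prob p {f j, g j} (\<lambda>F. f j \<in> F \<longrightarrow> g j \<in> F))"
    by (rule bern_prob_prod) (use assms in auto)
  also have "(\<lambda>F. \<forall>j\<in>J. f j \<in> F \<inter> {f j, g j} \<longrightarrow> g j \<in> F \<inter> {f j, g j})
      = (\<lambda>F. \<forall>j\<in>J. f j \<in> F \<longrightarrow> g j \<in> F)"
    by blast
  also have "(\<Prod>j\<in>J. bern_prob p {f j, g j} (\<lambda>F. f j \<in> F \<longrightarrow> g j \<in> F)) = (\<Prod>j\<in>J. 1 - p + p\<^sup>2)"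
    by (rule prod.cong[OF refl pair])
  finally show ?thesis by simp
qed

lemma finite_all_edges: "finite (all_edges n)"
  unfolding all_edges_def by (rule finite_subset[of _ "Pow {..<n}"]) auto

lemma edge_in_all_edges: "x < n \<Longrightarrow> y < n \<Longrightarrow> x \<noteq> y \<Longrightarrow> {x, y} \<in> all_edges n"
  unfolding all_edges_def by auto

lemma Gnp_prob_eq_bern_prob: "Gnp_prob n p P = bern_prob p (all_edges n) P"
proof -
  have "p ^ card E * (1 - p) ^ (card (all_edges n) - card E) = bern_weight p (all_edges n) E"
    if E: "E \<subseteq> all_edges n" for E
  proof -
    have "finite E" using finite_all_edges E finite_subset by blast
    have "bern_weight p (all_edges n) E = (\<Prod>e\<in>E. p) * (\<Prod>e\<in>all_edges n - E. 1 - p)"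
      unfolding bern_weight_def using finite_all_edges E
      by (simp add: prod.If_cases Int_absorb1 Diff_eq[symmetric])
    also have "\<dots> = p ^ card E * (1 - p) ^ (card (all_edges n) - card E)"
      using E \<open>finite E\<close> by (simp add: card_Diff_subset)
    finally show ?thesis by simp
  qed
  then show ?thesis unfolding Gnp_prob_def bern_prob_def by (intro sum.cong) auto
qed

text \<open>Of \<open>a > c\<close> only the edges from \<open>c\<close> to vertices outside the quadruple are kept, so that
the constraints concern pairwise disjoint sets of edges.\<close>
definition diamond_event :: "nat \<Rightarrow> nat \<Rightarrow> nat \<Rightarrow> nat \<Rightarrow> nat \<Rightarrow> nat set set \<Rightarrow> bool" where
  "diamond_event n a b c d E \<longleftrightarrow> {{a,b}, {c,b}, {a,d}, {c,d}} \<subseteq> E \<and>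
     (\<forall>z\<in>{..<n} - {a,b,c,d}. {c,z} \<in> E \<longrightarrow> {a,z} \<in> E)"

definition distinct_quadruples :: "nat \<Rightarrow> (nat \<times> nat \<times> nat \<times> nat) set" where
  "distinct_quadruples n =
     {(a, b, c, d) \<in> {..<n} \<times> {..<n} \<times> {..<n} \<times> {..<n}. distinct [a, b, c, d]}"

lemma finite_distinct_quadruples: "finite (distinct_quadruples n)"
  unfolding distinct_quadruples_def by (rule finite_subset[of _ "{..<n} \<times> {..<n} \<times> {..<n} \<times> {..<n}"]) auto

lemma card_distinct_quadruples_le: "card (distinct_quadruples n) \<le> n ^ 4"
proof -
  have "card (distinct_quadruples n) \<le> card ({..<n} \<times> {..<n} \<times> {..<n} \<times> {..<n})"
    unfolding distinct_quadruples_def by (rule card_mono) auto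
  then show ?thesis by (simp add: card_cartesian_product power4_eq_xxxx)
qed

lemma has_dom_diamond_imp_diamond_event:
  assumes "has_dom_diamond n E"
  shows "\<exists>(a, b, c, d)\<in>distinct_quadruples n. diamond_event n a b c d E"
proof -
  obtain a b c d where D: "dom_diamond n E a b c d"
    using assms unfolding has_dom_diamond_def by blast
  then have "diamond_event n a b c d E"
    unfolding dom_diamond_def diamond_event_def dominates_def adj_def by (auto simp: insert_commute)
  then show ?thesis using D unfolding dom_diamond_def distinct_quadruples_def by auto
qed

lemma bern_prob_diamond_event:
  assumes "a < n" "b < n" "c < n" "d < n" "distinct [a, b, c, d]"
  shows "bern_prob p (all_edges n) (diamond_event n a b c d) = p ^ 4 * (1 - p + p\<^sup>2) ^ (n - 4)"
proof -
  define S where "S = ({{a,b}, {c,b}, {a,d}, {c,d}} :: nat set set)"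
  define R where "R = {..<n} - {a,b,c,d}"
  define D where "D = (\<Union>z\<in>R. {{c,z}, {a,z}})"
  have "finite S" "finite D" unfolding S_def D_def R_def by auto
  have D_mem: "{c,z} \<in> D" "{a,z} \<in> D" if "z \<in> R" for z unfolding D_def using that by auto
  have "S \<inter> D = {}" unfolding S_def D_def R_def using assms(5) by (auto simp: doubleton_eq_iff)
  have "S \<union> D \<subseteq> all_edges n"
    unfolding S_def D_def R_def using assms by (auto intro!: edge_in_all_edges)
  have "bern_prob p (all_edges n) (diamond_event n a b c d)
      = bern_prob p (S \<union> D) (\<lambda>F. S \<subseteq> F \<and> (\<forall>z\<in>R. {c,z} \<in> F \<longrightarrow> {a,z} \<in> F))"
  proof (rule bern_prob_restrict[OF finite_all_edges \<open>S \<union> D \<subseteq> all_edges n\<close>])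
    fix E
    show "diamond_event n a b c d E
        \<longleftrightarrow> S \<subseteq> E \<inter> (S \<union> D) \<and> (\<forall>z\<in>R. {c,z} \<in> E \<inter> (S \<union> D) \<longrightarrow> {a,z} \<in> E \<inter> (S \<union> D))"
      unfolding diamond_event_def S_def[symmetric] R_def[symmetric] using D_mem by blast
  qed
  also have "\<dots> = bern_prob p S (\<lambda>F. S \<subseteq> F) * bern_prob p D (\<lambda>F. \<forall>z\<in>R. {c,z} \<in> F \<longrightarrow> {a,z} \<in> F)"
  proof (rule bern_prob_indep[OF \<open>finite S\<close> \<open>finite D\<close> \<open>S \<inter> D = {}\<close>])
    fix E
    show "S \<subseteq> E \<and> (\<forall>z\<in>R. {c,z} \<in> E \<longrightarrow> {a,z} \<in> E)
        \<longleftrightarrow> S \<subseteq> E \<inter> S \<and> (\<forall>z\<in>R. {c,z} \<in> E \<inter> D \<longrightarrow> {a,z} \<in> E \<inter> D)"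
      using D_mem by blast
  qed
  also have "bern_prob p S (\<lambda>F. S \<subseteq> F) = p ^ 4"
    using bern_prob_superset[OF \<open>finite S\<close>] assms(5)
    by (simp add: S_def doubleton_eq_iff power4_eq_xxxx mult.assoc)
  also have "bern_prob p D (\<lambda>F. \<forall>z\<in>R. {c,z} \<in> F \<longrightarrow> {a,z} \<in> F) = (1 - p + p\<^sup>2) ^ (n - 4)"
  proof -
    have "card R = n - 4" unfolding R_def using assms by (simp add: card_Diff_subset)
    moreover have "bern_prob p D (\<lambda>F. \<forall>z\<in>R. {c,z} \<in> F \<longrightarrow> {a,z} \<in> F) = (1 - p + p\<^sup>2) ^ card R"
      unfolding D_def
      by (rule bern_prob_implications) (use assms in \<open>auto simp: R_def doubleton_eq_iff\<close>)
    ultimately show ?thesis by simp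
  qed
  finally show ?thesis .
qed

lemma one_minus_plus_square_le_exp:
  fixes p :: real
  assumes "0 \<le> p" "p \<le> 1/2"
  shows "1 - p + p\<^sup>2 \<le> exp (- p / 2)"
proof -
  have "p * (2 * p) \<le> p * 1" by (rule mult_left_mono) (use assms in auto)
  then have "p\<^sup>2 \<le> p / 2" by (simp add: power2_eq_square)
  then have "1 - p + p\<^sup>2 \<le> 1 + (- p / 2)" by simp
  also have "\<dots> \<le> exp (- p / 2)" by (rule exp_ge_add_one_self)
  finally show ?thesis .
qed

lemma bern_prob_has_dom_diamond_le:
  assumes p: "0 \<le> p" "p \<le> 1/2" and "4 \<le> n"
  shows "bern_prob p (all_edges n) (has_dom_diamond n) \<le> exp 1 * (n * p) ^ 4 * exp (- (n * p) / 2)"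
proof -
  define I where "I = distinct_quadruples n"
  define q where "q = 1 - p + p\<^sup>2"
  have "0 \<le> q" unfolding q_def using p by (simp add: add_nonneg_nonneg)
  have "real (card I) \<le> real (n ^ 4)"
    unfolding I_def by (rule of_nat_mono[OF card_distinct_quadruples_le])
  define event where "event i = (case i of (a, b, c, d) \<Rightarrow> diamond_event n a b c d)" for i
  have "bern_prob p (all_edges n) (has_dom_diamond n)
      \<le> bern_prob p (all_edges n) (\<lambda>E. \<exists>i\<in>I. event i E)"
    using p has_dom_diamond_imp_diamond_event
    by (intro bern_prob_mono) (auto simp: I_def event_def case_prod_unfold)
  also have "\<dots> \<le> (\<Sum>i\<in>I. bern_prob p (all_edges n) (event i))"
    using p finite_distinct_quadruples by (intro bern_prob_union_bound) (auto simp: I_def)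
  also have "\<dots> = (\<Sum>i\<in>I. p ^ 4 * q ^ (n - 4))"
    by (intro sum.cong) (auto simp: I_def distinct_quadruples_def event_def q_def bern_prob_diamond_event)
  also have "\<dots> \<le> n ^ 4 * p ^ 4 * q ^ (n - 4)"
    using \<open>real (card I) \<le> real (n ^ 4)\<close> \<open>0 \<le> q\<close> p
    by (simp only: sum_constant mult.assoc) (intro mult_right_mono; simp)
  also have "\<dots> \<le> n ^ 4 * p ^ 4 * exp (- p / 2) ^ (n - 4)"
    using one_minus_plus_square_le_exp[OF p] \<open>0 \<le> q\<close> p
    by (intro mult_left_mono power_mono) (auto simp: q_def)
  also have "\<dots> = n ^ 4 * p ^ 4 * exp (- (n * p) / 2 + 2 * p)"
    using \<open>4 \<le> n\<close> by (simp add: exp_of_nat_mult[symmetric] of_nat_diff algebra_simps)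
  also have "\<dots> \<le> n ^ 4 * p ^ 4 * (exp 1 * exp (- (n * p) / 2))"
    using p by (intro mult_left_mono) (auto simp: exp_add[symmetric])
  also have "\<dots> = exp 1 * (n * p) ^ 4 * exp (- (n * p) / 2)"
    by (simp add: power_mult_distrib)
  finally show ?thesis .
qed

theorem proposition2p12:
  fixes p :: "nat \<Rightarrow> real"
  assumes "p \<longlonglongrightarrow> 0"
    and "filterlim (\<lambda>n. real n * p n) at_top sequentially"
  shows "(\<lambda>n. Gnp_prob n (p n) (\<lambda>E. \<not> has_dom_diamond n E)) \<longlonglongrightarrow> 1"
proof -
  have "eventually (\<lambda>n. p n \<le> 1/2) sequentially"
    using order_tendstoD(2)[OF assms(1), of "1/2"] by (auto elim: eventually_mono)
  moreover have "eventually (\<lambda>n. 0 < real n * p n) sequentially"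
    using assms(2) by (simp add: filterlim_at_top_dense)
  ultimately have bound: "eventually (\<lambda>n. 0 \<le> bern_prob (p n) (all_edges n) (has_dom_diamond n) \<and>
      bern_prob (p n) (all_edges n) (has_dom_diamond n)
        \<le> exp 1 * (n * p n) ^ 4 * exp (- (n * p n) / 2)) sequentially"
    using eventually_ge_at_top[of 4]
  proof eventually_elim
    case (elim n)
    then have p: "0 \<le> p n" "p n \<le> 1/2" "p n \<le> 1" "4 \<le> n" by (auto simp: zero_less_mult_iff)
    show ?case
      using bern_prob_nonneg[OF p(1,3)] bern_prob_has_dom_diamond_le[OF p(1,2,4)] by simp
  qed
  have "((\<lambda>x::real. exp 1 * x ^ 4 * exp (- x / 2)) \<longlongrightarrow> 0) at_top"
    by real_asymp
  from filterlim_compose[OF this assms(2)]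
  have "(\<lambda>n. exp 1 * (n * p n) ^ 4 * exp (- (n * p n) / 2)) \<longlonglongrightarrow> 0"
    by simp
  with bound have "(\<lambda>n. bern_prob (p n) (all_edges n) (has_dom_diamond n)) \<longlonglongrightarrow> 0"
    unfolding eventually_conj_iff by (elim conjE) (rule tendsto_sandwich[OF _ _ tendsto_const])
  from tendsto_diff[OF tendsto_const this, of 1] show ?thesis
    by (simp add: Gnp_prob_eq_bern_prob bern_prob_compl finite_all_edges)
qed

end
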